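(* Let $\mathcal{P}\subseteq[0,1]^n$ be a polytope and let $\tilde F_1,\tilde F_2$ be two different open faces of $\mathcal{P}$. If $\tilde F_1$ and $\tilde F_2$ are both contained in $(0,1)^n$, then no Bernoulli factory for $\mathcal{P}$ exists.
   Context: A face of $\mathcal{P}$ is a set of the form $F=\arg\max_{p\in\mathcal{P}}w^Tp$ for some $w\in\mathbb{R}^n$; its dimension is that of its affine span. The open face $\tilde F$ corresponding to a face $F$ is the set of points of $F$ that belong to no face of $\mathcal{P}$ of lower dimension. A Bernoulli factory with output set $V$ (for inputs $x\in[0,1]^n$) is a (possibly infinite) rooted binary tree whose internal nodes are labeled by an index $i\in[n]$ or a known constant $c\in(0,1)$ and whose leaves are labeled by elements of $V$; on input $x$ one walks from the root, at a node labeled $i$ flipping a fresh independent coin that is $1$ with probability $x_i$, at a node labeled $c$ a fresh coin of bias $c$, following the edge labeled by the outcome, and outputs the label of the leaf reached. For a polytope $\mathcal{P}$ with vertex set $V$, a Bernoulli factory for $\mathcal{P}$ is such a factory with output set $V$ that terminates almost surely on $\mathcal{P}\cap(0,1)^n$ and satisfies $\mathbb{E}[\mathcal{F}(x)]=x$ for all $x\in\mathcal{P}\cap(0,1)^n$. *)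

theory Defs
  imports "HOL-Analysis.Analysis"
begin

definition pface :: "(real^'n) set \<Rightarrow> (real^'n) set \<Rightarrow> bool" where
  "pface P F \<longleftrightarrow> (\<exists>w::real^'n. F = {p \<in> P. \<forall>q \<in> P. w \<bullet> q \<le> w \<bullet> p})"

definition open_face :: "(real^'n) set \<Rightarrow> (real^'n) set \<Rightarrow> (real^'n) set" where
  "open_face P F = {p \<in> F. \<not> (\<exists>G. pface P G \<and> aff_dim G < aff_dim F \<and> p \<in> G)}"

definition vertices :: "(real^'n) set \<Rightarrow> (real^'n) set" where
  "vertices P = {v. v extreme_point_of P}"

definition unit_cube :: "(real^'n) set" where
  "unit_cube = {x. \<forall>i. 0 \<le> x $ i \<and> x $ i \<le> 1}"

definition open_unit_cube :: "(real^'n) set" where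
  "open_unit_cube = {x. \<forall>i. 0 < x $ i \<and> x $ i < 1}"

text \<open>Bernoulli factory trees: a possibly infinite rooted binary tree is encoded by
  its labelling of all finite paths (lists of coin outcomes; True = coin came up 1).
  Labels of paths passing through a leaf are irrelevant (never reached).\<close>

datatype ('i, 'v) node = Leaf 'v | Coin 'i | Const real

fun edge_prob :: "('n, 'v) node \<Rightarrow> real^'n \<Rightarrow> bool \<Rightarrow> real" where
  "edge_prob (Leaf v) x b = 0"
| "edge_prob (Coin i) x b = (if b then x $ i else 1 - x $ i)"
| "edge_prob (Const c) x b = (if b then c else 1 - c)"

definition path_prob :: "(bool list \<Rightarrow> ('n, 'v) node) \<Rightarrow> real^'n \<Rightarrow> bool list \<Rightarrow> real" where
  "path_prob T x p = (\<Prod>k<length p. edge_prob (T (take k p)) x (p ! k))"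

definition leaf_paths :: "(bool list \<Rightarrow> ('n, 'v) node) \<Rightarrow> bool list set" where
  "leaf_paths T = {p. \<exists>v. T p = Leaf v}"

fun leaf_val :: "('i, real^'n) node \<Rightarrow> real^'n" where
  "leaf_val (Leaf v) = v"
| "leaf_val (Coin i) = 0"
| "leaf_val (Const c) = 0"

definition factory_tree :: "(real^'n) set \<Rightarrow> (bool list \<Rightarrow> ('n, real^'n) node) \<Rightarrow> bool" where
  "factory_tree V T \<longleftrightarrow>
     (\<forall>p. (\<forall>v. T p = Leaf v \<longrightarrow> v \<in> V) \<and> (\<forall>c. T p = Const c \<longrightarrow> 0 < c \<and> c < 1))"

definition bernoulli_factory_for :: "(real^'n) set \<Rightarrow> (bool list \<Rightarrow> ('n, real^'n) node) \<Rightarrow> bool" where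
  "bernoulli_factory_for P T \<longleftrightarrow> factory_tree (vertices P) T \<and>
     (\<forall>x \<in> P \<inter> open_unit_cube.
        ((\<lambda>p. path_prob T x p) has_sum 1) (leaf_paths T) \<and>
        ((\<lambda>p. path_prob T x p *\<^sub>R leaf_val (T p)) has_sum x) (leaf_paths T))"

end

theory Submission
  imports Defs
begin

text \<open>Suppose a factory exists and a face \<open>F = argmax w\<close> contains a point \<open>x\<close> of the open cube.
  The output on input \<open>x\<close> is a vertex of \<open>P\<close> with mean \<open>x\<close>, so it lies in \<open>F\<close> almost surely:
  every leaf reachable with positive probability is maximal for \<open>w\<close>. Which leaves are reachable
  does not depend on the input as long as all coins are non-degenerate, so every \<open>y\<close> in
  \<open>P \<inter> (0,1)\<^sup>n\<close> is a mean of vertices in \<open>F\<close> and hence lies in \<open>F\<close>. Applied to both faces,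
  each face contains the open face of the other, which forces \<open>F\<^sub>1 = F\<^sub>2\<close>.\<close>

lemma convex_comb_eq_max_on_support:
  fixes p f :: "'a \<Rightarrow> real"
  assumes "(p has_sum 1) A" and "((\<lambda>a. p a * f a) has_sum M) A"
    and "\<And>a. a \<in> A \<Longrightarrow> 0 \<le> p a" and "\<And>a. a \<in> A \<Longrightarrow> f a \<le> M"
    and "a \<in> A" and "0 < p a"
  shows "f a = M"
proof (rule ccontr)
  assume "f a \<noteq> M"
  with assms(4)[OF assms(5)] have "f a < M"
    by simp
  with assms(6) have "p a * f a < p a * M"
    by simp
  moreover have "((\<lambda>a. p a * M) has_sum M) A"
    using has_sum_cmult_left[OF assms(1), of M] by (simp add: mult.commute)
  moreover have "p b * f b \<le> p b * M" if "b \<in> A" for b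
    using assms(3,4) that by (simp add: mult_left_mono)
  ultimately have "M < M"
    using has_sum_strict_mono[OF assms(2)] assms(5) by blast
  then show False
    by simp
qed

lemma edge_prob_pos:
  assumes "factory_tree V T" and "x \<in> open_unit_cube" and "\<forall>v. T q \<noteq> Leaf v"
  shows "0 < edge_prob (T q) x b"
  using assms by (cases "T q") (auto simp: open_unit_cube_def factory_tree_def)

lemma edge_prob_nonneg:
  assumes "factory_tree V T" and "x \<in> open_unit_cube"
  shows "0 \<le> edge_prob (T q) x b"
  using edge_prob_pos[OF assms, of q b] by (cases "T q") auto

lemma path_prob_nonneg:
  assumes "factory_tree V T" and "x \<in> open_unit_cube"
  shows "0 \<le> path_prob T x p"
  unfolding path_prob_def using edge_prob_nonneg[OF assms] by (simp add: prod_nonneg)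

lemma path_prob_pos_iff:
  assumes "factory_tree V T" and "x \<in> open_unit_cube"
  shows "0 < path_prob T x p \<longleftrightarrow> (\<forall>k<length p. \<forall>v. T (take k p) \<noteq> Leaf v)"
proof -
  have "path_prob T x p = 0 \<longleftrightarrow> (\<exists>k<length p. edge_prob (T (take k p)) x (p ! k) = 0)"
    unfolding path_prob_def by (simp add: Bex_def)
  also have "\<dots> \<longleftrightarrow> (\<exists>k<length p. \<exists>v. T (take k p) = Leaf v)"
    using edge_prob_pos[OF assms] by (metis edge_prob.simps(1) less_irrefl)
  finally show ?thesis
    using path_prob_nonneg[OF assms, of p] by force
qed

lemma bernoulli_factory_leaf_val_in:
  assumes "bernoulli_factory_for P T" and "p \<in> leaf_paths T"
  shows "leaf_val (T p) \<in> P"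
proof -
  obtain v where v: "T p = Leaf v"
    using assms(2) unfolding leaf_paths_def by blast
  with assms(1) have "v extreme_point_of P"
    unfolding bernoulli_factory_for_def factory_tree_def vertices_def by blast
  then show ?thesis
    using v by (simp add: extreme_point_of_def)
qed

lemma bernoulli_factory_inner_has_sum:
  assumes "bernoulli_factory_for P T" and "x \<in> P \<inter> open_unit_cube"
  shows "((\<lambda>p. path_prob T x p * (w \<bullet> leaf_val (T p))) has_sum (w \<bullet> x)) (leaf_paths T)"
proof -
  have "((\<lambda>p. path_prob T x p *\<^sub>R leaf_val (T p)) has_sum x) (leaf_paths T)"
    using assms unfolding bernoulli_factory_for_def by blast
  from has_sum_bounded_linear[OF bounded_linear_inner_right this, of w]
  show ?thesis by simp
qed

lemma bernoulli_factory_argmax_const: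
  assumes T: "bernoulli_factory_for P T"
    and x: "x \<in> P \<inter> open_unit_cube" and y: "y \<in> P \<inter> open_unit_cube"
    and max: "\<And>q. q \<in> P \<Longrightarrow> w \<bullet> q \<le> w \<bullet> x"
  shows "w \<bullet> y = w \<bullet> x"
proof -
  define L where "L = leaf_paths T"
  define g where "g p = w \<bullet> leaf_val (T p)" for p
  have ft: "factory_tree (vertices P) T"
    using T unfolding bernoulli_factory_for_def by blast
  have sum1: "((\<lambda>p. path_prob T z p) has_sum 1) L" if "z \<in> P \<inter> open_unit_cube" for z
    using T that unfolding bernoulli_factory_for_def L_def by blast
  have sum_g: "((\<lambda>p. path_prob T z p * g p) has_sum w \<bullet> z) L" if "z \<in> P \<inter> open_unit_cube" for z
    using bernoulli_factory_inner_has_sum[OF T that] unfolding L_def g_def .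
  have nonneg: "0 \<le> path_prob T z p" if "z \<in> P \<inter> open_unit_cube" for z p
    using path_prob_nonneg[OF ft] that by blast
  have g_le: "g p \<le> w \<bullet> x" if "p \<in> L" for p
    using max bernoulli_factory_leaf_val_in[OF T] that unfolding L_def g_def by blast
  have supp: "path_prob T y p * g p = path_prob T y p * (w \<bullet> x)" if p: "p \<in> L" for p
  proof (cases "0 < path_prob T y p")
    case True
    then have "0 < path_prob T x p"
      using path_prob_pos_iff[OF ft] x y by blast
    with convex_comb_eq_max_on_support[OF sum1[OF x] sum_g[OF x] nonneg[OF x] g_le p]
    show ?thesis
      by simp
  next
    case False
    with nonneg[OF y, of p] show ?thesis
      by simp
  qed
  from sum_g[OF y] have "((\<lambda>p. path_prob T y p * (w \<bullet> x)) has_sum w \<bullet> y) L"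
    by (subst (asm) has_sum_cong[OF supp])
  moreover have "((\<lambda>p. path_prob T y p * (w \<bullet> x)) has_sum w \<bullet> x) L"
    using has_sum_cmult_left[OF sum1[OF y]] by simp
  ultimately show ?thesis
    by (rule has_sum_unique)
qed

lemma bernoulli_factory_open_cube_subset_pface:
  assumes "bernoulli_factory_for P T" and "pface P F" and "F \<inter> open_unit_cube \<noteq> {}"
  shows "P \<inter> open_unit_cube \<subseteq> F"
proof
  fix y assume y: "y \<in> P \<inter> open_unit_cube"
  obtain w where F: "F = {p \<in> P. \<forall>q \<in> P. w \<bullet> q \<le> w \<bullet> p}"
    using assms(2) unfolding pface_def by blast
  obtain x where "x \<in> F \<inter> open_unit_cube"
    using assms(3) by blast
  with F have x: "x \<in> P \<inter> open_unit_cube" and max: "\<And>q. q \<in> P \<Longrightarrow> w \<bullet> q \<le> w \<bullet> x"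
    by auto
  have "w \<bullet> y = w \<bullet> x"
    by (rule bernoulli_factory_argmax_const[OF assms(1) x y max])
  with x y max show "y \<in> F"
    unfolding F by auto
qed

lemma pface_nonempty:
  assumes "compact P" and "P \<noteq> {}" and "pface P F"
  shows "F \<noteq> {}"
proof -
  obtain w where F: "F = {p \<in> P. \<forall>q \<in> P. w \<bullet> q \<le> w \<bullet> p}"
    using assms(3) unfolding pface_def by blast
  have "continuous_on P (\<lambda>p. w \<bullet> p)"
    by (intro continuous_intros)
  then obtain z where "z \<in> P" "\<forall>q \<in> P. w \<bullet> q \<le> w \<bullet> z"
    using continuous_attains_sup[OF assms(1,2)] by blast
  then show ?thesis
    unfolding F by blast
qed

lemma pface_face_of:
  assumes "convex P" and "pface P F"
  shows "F face_of P"
proof (cases "F = {}")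
  case False
  obtain w where F: "F = {p \<in> P. \<forall>q \<in> P. w \<bullet> q \<le> w \<bullet> p}"
    using assms(2) unfolding pface_def by blast
  with False obtain z where z: "z \<in> P" "\<forall>q \<in> P. w \<bullet> q \<le> w \<bullet> z"
    by blast
  then have "F = P \<inter> {p. w \<bullet> p = w \<bullet> z}"
    unfolding F by (auto intro: order_antisym)
  then show ?thesis
    using face_of_Int_supporting_hyperplane_le[OF assms(1)] z(2) by simp
qed simp

lemma pface_Int:
  assumes "pface P F1" and "pface P F2" and "F1 \<inter> F2 \<noteq> {}"
  shows "pface P (F1 \<inter> F2)"
proof -
  obtain w1 where F1: "F1 = {p \<in> P. \<forall>q \<in> P. w1 \<bullet> q \<le> w1 \<bullet> p}"
    using assms(1) unfolding pface_def by blast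
  obtain w2 where F2: "F2 = {p \<in> P. \<forall>q \<in> P. w2 \<bullet> q \<le> w2 \<bullet> p}"
    using assms(2) unfolding pface_def by blast
  obtain z where z: "z \<in> F1" "z \<in> F2"
    using assms(3) by blast
  have "F1 \<inter> F2 = {p \<in> P. \<forall>q \<in> P. (w1 + w2) \<bullet> q \<le> (w1 + w2) \<bullet> p}"
  proof (intro equalityI subsetI)
    fix p assume "p \<in> F1 \<inter> F2"
    then show "p \<in> {p \<in> P. \<forall>q \<in> P. (w1 + w2) \<bullet> q \<le> (w1 + w2) \<bullet> p}"
      unfolding F1 F2 by (auto simp: inner_add_left add_mono)
  next
    fix p assume p: "p \<in> {p \<in> P. \<forall>q \<in> P. (w1 + w2) \<bullet> q \<le> (w1 + w2) \<bullet> p}"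
    with z have "w1 \<bullet> z + w2 \<bullet> z \<le> w1 \<bullet> p + w2 \<bullet> p"
      unfolding F1 F2 by (auto simp: inner_add_left)
    moreover have "w1 \<bullet> p \<le> w1 \<bullet> z" "w2 \<bullet> p \<le> w2 \<bullet> z"
      using z p unfolding F1 F2 by auto
    ultimately have "w1 \<bullet> p = w1 \<bullet> z" "w2 \<bullet> p = w2 \<bullet> z"
      by linarith+
    with z p show "p \<in> F1 \<inter> F2"
      unfolding F1 F2 by auto
  qed
  then show ?thesis
    unfolding pface_def by blast
qed

lemma rel_interior_subset_open_face:
  assumes "convex P" and "pface P F"
  shows "rel_interior F \<subseteq> open_face P F"
proof
  fix p assume p: "p \<in> rel_interior F"
  have "F \<subseteq> P"
    using assms(2) unfolding pface_def by blast
  have "aff_dim F \<le> aff_dim G" if G: "pface P G" "p \<in> G" for G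
  proof -
    have "G \<inter> rel_interior F \<noteq> {}"
      using p G(2) by blast
    with pface_face_of[OF assms(1) G(1)] \<open>F \<subseteq> P\<close> have "F \<subseteq> G"
      by (rule subset_of_face_of)
    then show ?thesis
      by (rule aff_dim_subset)
  qed
  moreover have "p \<in> F"
    using p rel_interior_subset by blast
  ultimately show "p \<in> open_face P F"
    unfolding open_face_def by (auto simp: not_less)
qed

lemma open_face_nonempty:
  assumes "compact P" and "convex P" and "P \<noteq> {}" and "pface P F"
  shows "open_face P F \<noteq> {}"
proof -
  have "convex F"
    using face_of_imp_convex pface_face_of[OF assms(2,4)] by blast
  with pface_nonempty[OF assms(1,3,4)] have "rel_interior F \<noteq> {}"
    by (simp add: rel_interior_eq_empty)
  with rel_interior_subset_open_face[OF assms(2,4)] show ?thesis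
    by blast
qed

lemma open_face_meets_imp_subset:
  assumes "convex P" and "pface P F1" and "pface P F2" and "open_face P F1 \<inter> F2 \<noteq> {}"
  shows "F1 \<subseteq> F2"
proof -
  obtain p where p: "p \<in> open_face P F1" "p \<in> F2"
    using assms(4) by blast
  then have "p \<in> F1 \<inter> F2"
    unfolding open_face_def by blast
  with p(1) pface_Int[OF assms(2,3)] have dim: "\<not> aff_dim (F1 \<inter> F2) < aff_dim F1"
    unfolding open_face_def by blast
  have F1: "F1 face_of P"
    using pface_face_of[OF assms(1,2)] .
  have "(F1 \<inter> F2) face_of F1"
  proof (rule face_of_subset)
    show "(F1 \<inter> F2) face_of P"
      using face_of_Int[OF F1 pface_face_of[OF assms(1,3)]] .
    show "F1 \<subseteq> P"
      using face_of_imp_subset[OF F1] .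
  qed simp
  with dim have "F1 \<inter> F2 = F1"
    using face_of_aff_dim_lt[OF face_of_imp_convex[OF F1]] by blast
  then show ?thesis
    by blast
qed

theorem lemmaB5:
  fixes P F1 F2 :: "(real^'n) set"
  assumes "polytope P" and "P \<subseteq> unit_cube"
    and "pface P F1" and "pface P F2"
    and "open_face P F1 \<noteq> open_face P F2"
    and "open_face P F1 \<subseteq> open_unit_cube" and "open_face P F2 \<subseteq> open_unit_cube"
  shows "\<not> (\<exists>T. bernoulli_factory_for P T)"
proof
  assume "\<exists>T. bernoulli_factory_for P T"
  then obtain T where T: "bernoulli_factory_for P T" ..
  have "P \<noteq> {}"
    using assms(3-5) unfolding pface_def by force
  have compact_convex: "compact P" "convex P"
    using assms(1) by (simp_all add: polytope_imp_compact polytope_imp_convex)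
  have F_subset: "F \<subseteq> F'"
    if F: "pface P F" "open_face P F \<subseteq> open_unit_cube"
      and F': "pface P F'" "open_face P F' \<subseteq> open_unit_cube" for F F'
  proof -
    have ne: "open_face P F \<noteq> {}" "open_face P F' \<noteq> {}"
      using open_face_nonempty[OF compact_convex \<open>P \<noteq> {}\<close>] F(1) F'(1) by auto
    have "open_face P F \<subseteq> P \<inter> open_unit_cube" "open_face P F' \<subseteq> F' \<inter> open_unit_cube"
      using F F' unfolding open_face_def pface_def by auto
    with bernoulli_factory_open_cube_subset_pface[OF T F'(1)] ne
    have "open_face P F \<inter> F' \<noteq> {}"
      by blast
    then show ?thesis
      by (rule open_face_meets_imp_subset[OF compact_convex(2) F(1) F'(1)])
  qed
  have "F1 = F2"
    using F_subset[of F1 F2] F_subset[of F2 F1] assms(3,4,6,7) by blast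
  with assms(5) show False
    by simp
qed

end
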